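(* Let $(\alpha,\beta)$ be an admissible, non-null pair and assume there is no $x\in(0,1)$ with $\pi_x(\alpha)=\pi_x(\beta)$. Then for every $a\in(1,2]$ there is a $p$ with $1-1/a\le p\le 1/a$ such that $f_{(a,p,+)}(\pi_{1/a}(\omega))=\pi_{1/a}(S\omega)$ for all $\omega\in\Omega_{(\alpha,\beta,+)}$ and $f_{(a,p,-)}(\pi_{1/a}(\omega))=\pi_{1/a}(S\omega)$ for all $\omega\in\Omega_{(\alpha,\beta,-)}$.
   Context: For $1<a\le2$, $1-\frac1a\le p\le\frac1a$: $f_{(a,p,-)}(x)=ax$ if $x\le p$, $ax+(1-a)$ if $x>p$; $f_{(a,p,+)}(x)=ax$ if $x<p$, $ax+(1-a)$ if $x\ge p$. $\Omega=\{0,1\}^\infty$ (infinite binary strings $\omega_0\omega_1\cdots$), $S$ the left shift, $\preceq$ the lexicographic order with intervals $[\alpha,\beta]=\{\omega:\alpha\preceq\omega\preceq\beta\}$ and half-open analogues. $(\alpha,\beta)$ is admissible if $\alpha_0=0,\alpha_1=1,\beta_0=1,\beta_1=0$ and $S^n\alpha\notin(\alpha,\beta]$, $S^n\beta\notin[\alpha,\beta)$ for all $n\ge0$. $\Omega_{(\alpha,\beta,-)}=\{\omega:S^n\omega\notin(\alpha,\beta]\ \forall n\ge0\}$, $\Omega_{(\alpha,\beta,+)}=\{\omega:S^n\omega\notin[\alpha,\beta)\ \forall n\ge0\}$, $\Omega_{(\alpha,\beta)}$ their union. With $\Gamma_n=\{\omega_0\cdots\omega_n:\omega\in\Gamma\}$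 and $h(\Gamma)=\limsup_n\frac1n\ln|\Gamma_n|$, the pair is non-null if $h(\Omega_{(\alpha,\beta)})>0$. Projection: $\pi_x(\omega)=(1-x)\sum_{k\ge0}\omega_kx^k$ for $x\in[0,1)$. *)

theory Defs
  imports "HOL-Analysis.Analysis" "HOL-Library.Liminf_Limsup"
begin

(* Infinite binary strings: omega :: nat => bool, with True standing for 1, False for 0 *)
type_synonym bstr = "nat \<Rightarrow> bool"

definition bit :: "bool \<Rightarrow> real" where
  "bit b = (if b then 1 else 0)"

definition shift :: "bstr \<Rightarrow> bstr" where
  "shift \<omega> = (\<lambda>k. \<omega> (Suc k))"

definition lex_less :: "bstr \<Rightarrow> bstr \<Rightarrow> bool" where
  "lex_less \<omega> \<eta> \<longleftrightarrow> (\<exists>n. (\<forall>k<n. \<omega> k = \<eta> k) \<and> \<not> \<omega> n \<and> \<eta> n)"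

definition lex_le :: "bstr \<Rightarrow> bstr \<Rightarrow> bool" where
  "lex_le \<omega> \<eta> \<longleftrightarrow> lex_less \<omega> \<eta> \<or> \<omega> = \<eta>"

definition admissible :: "bstr \<Rightarrow> bstr \<Rightarrow> bool" where
  "admissible \<alpha> \<beta> \<longleftrightarrow>
     \<not> \<alpha> 0 \<and> \<alpha> 1 \<and> \<beta> 0 \<and> \<not> \<beta> 1 \<and>
     (\<forall>n. \<not> (lex_less \<alpha> ((shift ^^ n) \<alpha>) \<and> lex_le ((shift ^^ n) \<alpha>) \<beta>)) \<and>
     (\<forall>n. \<not> (lex_le \<alpha> ((shift ^^ n) \<beta>) \<and> lex_less ((shift ^^ n) \<beta>) \<beta>))"

definition Omega_minus :: "bstr \<Rightarrow> bstr \<Rightarrow> bstr set" where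
  "Omega_minus \<alpha> \<beta> = {\<omega>. \<forall>n. \<not> (lex_less \<alpha> ((shift ^^ n) \<omega>) \<and> lex_le ((shift ^^ n) \<omega>) \<beta>)}"

definition Omega_plus :: "bstr \<Rightarrow> bstr \<Rightarrow> bstr set" where
  "Omega_plus \<alpha> \<beta> = {\<omega>. \<forall>n. \<not> (lex_le \<alpha> ((shift ^^ n) \<omega>) \<and> lex_less ((shift ^^ n) \<omega>) \<beta>)}"

definition Omega_ab :: "bstr \<Rightarrow> bstr \<Rightarrow> bstr set" where
  "Omega_ab \<alpha> \<beta> = Omega_minus \<alpha> \<beta> \<union> Omega_plus \<alpha> \<beta>"

definition words :: "bstr set \<Rightarrow> nat \<Rightarrow> bool list set" where
  "words \<Gamma> n = (\<lambda>\<omega>. map \<omega> [0..<Suc n]) ` \<Gamma>"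

definition entropy :: "bstr set \<Rightarrow> ereal" where
  "entropy \<Gamma> = limsup (\<lambda>n. ereal (ln (real (card (words \<Gamma> n))) / real n))"

definition non_null :: "bstr \<Rightarrow> bstr \<Rightarrow> bool" where
  "non_null \<alpha> \<beta> \<longleftrightarrow> entropy (Omega_ab \<alpha> \<beta>) > 0"

definition proj :: "real \<Rightarrow> bstr \<Rightarrow> real" where
  "proj x \<omega> = (1 - x) * (\<Sum>k. bit (\<omega> k) * x ^ k)"

definition f_minus :: "real \<Rightarrow> real \<Rightarrow> real \<Rightarrow> real" where
  "f_minus a p x = (if x \<le> p then a * x else a * x + (1 - a))"

definition f_plus :: "real \<Rightarrow> real \<Rightarrow> real \<Rightarrow> real" where
  "f_plus a p x = (if x < p then a * x else a * x + (1 - a))"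

end

theory Submission
  imports Defs
begin

text \<open>
  Let \<open>P \<omega> y = \<Sum>\<^sub>k \<omega>\<^sub>k y\<^sup>k\<close> and call \<open>y\<close> ordered if on \<open>\<Omega>(\<alpha>,\<beta>)\<close> every sequence starting
  with 0 has a smaller value of \<open>P \<cdot> y\<close> than every sequence starting with 1. By admissibility the
  former are lexicographically at most \<open>\<alpha>\<close> and the latter at least \<open>\<beta>\<close>, so cancelling a common
  prefix shows that at an ordered \<open>y\<close> the two classes are separated by the gap \<open>P \<beta> y - P \<alpha> y\<close>,
  which is positive because \<open>\<pi>\<^sub>y \<alpha> \<noteq> \<pi>\<^sub>y \<beta>\<close>. Every \<open>y \<le> 1/2\<close> is ordered, the ordered
  parameters are closed, and since \<open>P \<omega>\<close> is Lipschitz in \<open>y\<close> uniformly in \<open>\<omega>\<close> a positive gap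
  persists slightly to the right. Hence every \<open>y \<in> [0,1)\<close> is ordered, \<open>\<pi>\<^sub>1\<^sub>/\<^sub>a\<close> is strictly
  increasing on \<open>\<Omega>(\<alpha>,\<beta>)\<close>, and a threshold \<open>p\<close> between the images of the two classes makes
  \<open>f(a,p,\<plusminus>)\<close> conjugate to the shift.
\<close>

definition bin_series :: "bstr \<Rightarrow> real \<Rightarrow> real" where
  "bin_series \<omega> y = (\<Sum>k. bit (\<omega> k) * y ^ k)"

lemma proj_eq_bin_series: "proj x \<omega> = (1 - x) * bin_series \<omega> x"
  unfolding proj_def bin_series_def ..

lemma bit_nonneg [simp]: "0 \<le> bit b" and bit_le_one [simp]: "bit b \<le> 1"
  by (auto simp: bit_def)

lemma funpow_shift: "(shift ^^ n) \<omega> = (\<lambda>k. \<omega> (k + n))"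
  by (induction n) (auto simp: shift_def)

subsection \<open>The binary power series\<close>

lemma summable_bin_series:
  assumes "0 \<le> y" "y < 1"
  shows "summable (\<lambda>k. bit (\<omega> k) * y ^ k)"
proof (rule summable_comparison_test')
  show "summable (\<lambda>k. y ^ k)" using assms by (simp add: summable_geometric)
  show "norm (bit (\<omega> n) * y ^ n) \<le> y ^ n" for n
    using assms by (auto simp: bit_def)
qed

lemma bin_series_nonneg: "0 \<le> y \<Longrightarrow> y < 1 \<Longrightarrow> 0 \<le> bin_series \<omega> y"
  unfolding bin_series_def using summable_bin_series by (intro suminf_nonneg) auto

lemma bin_series_le:
  assumes "0 \<le> y" "y < 1"
  shows "bin_series \<omega> y \<le> 1 / (1 - y)"
proof -
  have "bin_series \<omega> y \<le> (\<Sum>k. y ^ k)" unfolding bin_series_def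
    using summable_bin_series[OF assms] assms
    by (intro suminf_le) (auto simp: bit_def summable_geometric)
  also have "\<dots> = 1 / (1 - y)" using assms by (simp add: suminf_geometric)
  finally show ?thesis .
qed

lemma bin_series_split:
  assumes "0 \<le> y" "y < 1"
  shows "bin_series \<omega> y = (\<Sum>k<n. bit (\<omega> k) * y ^ k) + y ^ n * bin_series ((shift ^^ n) \<omega>) y"
proof -
  have "bin_series \<omega> y = (\<Sum>k. bit (\<omega> (k + n)) * y ^ (k + n)) + (\<Sum>k<n. bit (\<omega> k) * y ^ k)"
    unfolding bin_series_def
    using suminf_split_initial_segment[OF summable_bin_series[OF assms], of \<omega> n] by simp
  also have "(\<Sum>k. bit (\<omega> (k + n)) * y ^ (k + n)) = (\<Sum>k. y ^ n * (bit (\<omega> (k + n)) * y ^ k))"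
    by (simp add: power_add mult_ac)
  also have "\<dots> = y ^ n * bin_series ((shift ^^ n) \<omega>) y"
    unfolding bin_series_def funpow_shift
    by (rule suminf_mult) (rule summable_bin_series[OF assms])
  finally show ?thesis by simp
qed

lemma bin_series_unfold:
  "0 \<le> y \<Longrightarrow> y < 1 \<Longrightarrow> bin_series \<omega> y = bit (\<omega> 0) + y * bin_series (shift \<omega>) y"
  using bin_series_split[of y \<omega> 1] by (simp add: shift_def)

lemma bin_series_at_0: "bin_series \<omega> 0 = bit (\<omega> 0)"
  using bin_series_unfold[of 0 \<omega>] by simp

lemma bin_series_diff_common_prefix:
  assumes "0 \<le> y" "y < 1" "\<forall>k<n. u k = v k"
  shows "bin_series v y - bin_series u y
           = y ^ n * (bin_series ((shift ^^ n) v) y - bin_series ((shift ^^ n) u) y)"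
proof -
  have "(\<Sum>k<n. bit (u k) * y ^ k) = (\<Sum>k<n. bit (v k) * y ^ k)"
    using assms(3) by (intro sum.cong) auto
  then show ?thesis
    using bin_series_split[OF assms(1,2), of u n] bin_series_split[OF assms(1,2), of v n]
    by (simp add: algebra_simps)
qed

lemma bin_series_mono_common_prefix:
  assumes "0 \<le> y" "y < 1" "\<forall>k<n. u k = v k"
    and "bin_series ((shift ^^ n) u) y \<le> bin_series ((shift ^^ n) v) y"
  shows "bin_series u y \<le> bin_series v y"
  using bin_series_diff_common_prefix[OF assms(1-3)] assms(1,4)
  by (metis diff_ge_0_iff_ge zero_le_mult_iff zero_le_power)

lemma abs_power_diff_le:
  fixes y z r :: real
  assumes "0 \<le> y" "0 \<le> z" "y \<le> r" "z \<le> r"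
  shows "\<bar>y ^ k - z ^ k\<bar> \<le> \<bar>y - z\<bar> * (real k * r ^ (k - 1))"
proof -
  have "y ^ k - z ^ k = (y - z) * (\<Sum>i<k. z ^ (k - Suc i) * y ^ i)"
    by (rule power_diff_sumr2)
  moreover have "(\<Sum>i<k. z ^ (k - Suc i) * y ^ i) \<le> (\<Sum>i<k. r ^ (k - 1))"
  proof (intro sum_mono)
    fix i assume "i \<in> {..<k}"
    then have "z ^ (k - Suc i) * y ^ i \<le> r ^ (k - Suc i) * r ^ i"
      using assms by (intro mult_mono power_mono) auto
    also have "\<dots> = r ^ (k - 1)" using \<open>i \<in> {..<k}\<close> by (simp add: power_add[symmetric])
    finally show "z ^ (k - Suc i) * y ^ i \<le> r ^ (k - 1)" .
  qed
  moreover have "0 \<le> (\<Sum>i<k. z ^ (k - Suc i) * y ^ i)" using assms by (intro sum_nonneg) auto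
  ultimately show ?thesis by (simp add: abs_mult mult_left_mono)
qed

lemma summable_geometric_derivative:
  assumes "0 \<le> r" "r < 1"
  shows "summable (\<lambda>k. real k * r ^ (k - 1))"
proof -
  have "summable (\<lambda>n. diffs (\<lambda>_. 1::real) n * r ^ n)"
    by (rule termdiff_converges[of r 1]) (use assms in \<open>auto simp: summable_geometric\<close>)
  then have "summable (\<lambda>n. real (n + 1) * r ^ (n + 1 - 1))" by (simp add: diffs_def)
  then show ?thesis by (subst summable_iff_shift[symmetric, of _ 1]) simp
qed

lemma bin_series_lipschitz:
  assumes "0 \<le> r" "r < 1"
  obtains L where "0 \<le> L"
    and "\<And>\<omega> y z. 0 \<le> y \<Longrightarrow> y \<le> r \<Longrightarrow> 0 \<le> z \<Longrightarrow> z \<le> r \<Longrightarrow>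
           \<bar>bin_series \<omega> y - bin_series \<omega> z\<bar> \<le> \<bar>y - z\<bar> * L"
proof
  define L where "L = (\<Sum>k. real k * r ^ (k - 1))"
  have sL: "summable (\<lambda>k. real k * r ^ (k - 1))"
    using summable_geometric_derivative[OF assms] .
  show "0 \<le> L" unfolding L_def using assms by (intro suminf_nonneg sL) auto
  fix \<omega> y z assume yz: "0 \<le> y" "y \<le> r" "0 \<le> z" "z \<le> r"
  have sy: "summable (\<lambda>k. bit (\<omega> k) * y ^ k)" and sz: "summable (\<lambda>k. bit (\<omega> k) * z ^ k)"
    using yz assms by (auto intro: summable_bin_series)
  have sd: "summable (\<lambda>k. \<bar>y - z\<bar> * (real k * r ^ (k - 1)))"
    using sL by (rule summable_mult)
  have term_le: "\<bar>bit (\<omega> k) * y ^ k - bit (\<omega> k) * z ^ k\<bar> \<le> \<bar>y - z\<bar> * (real k * r ^ (k - 1))"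
    for k
  proof -
    have "\<bar>bit (\<omega> k) * y ^ k - bit (\<omega> k) * z ^ k\<bar> = bit (\<omega> k) * \<bar>y ^ k - z ^ k\<bar>"
      by (simp add: right_diff_distrib[symmetric] abs_mult)
    also have "\<dots> \<le> \<bar>y ^ k - z ^ k\<bar>" by (simp add: mult_left_le_one_le)
    also have "\<dots> \<le> \<bar>y - z\<bar> * (real k * r ^ (k - 1))"
      using yz by (intro abs_power_diff_le) auto
    finally show ?thesis .
  qed
  have sa: "summable (\<lambda>k. \<bar>bit (\<omega> k) * y ^ k - bit (\<omega> k) * z ^ k\<bar>)"
    by (rule summable_comparison_test'[OF sd]) (use term_le in auto)
  have "bin_series \<omega> y - bin_series \<omega> z = (\<Sum>k. bit (\<omega> k) * y ^ k - bit (\<omega> k) * z ^ k)"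
    unfolding bin_series_def using sy sz by (rule suminf_diff)
  then have "\<bar>bin_series \<omega> y - bin_series \<omega> z\<bar>
               \<le> (\<Sum>k. \<bar>bit (\<omega> k) * y ^ k - bit (\<omega> k) * z ^ k\<bar>)"
    using summable_rabs[OF sa] by simp
  also have "\<dots> \<le> (\<Sum>k. \<bar>y - z\<bar> * (real k * r ^ (k - 1)))"
    by (rule suminf_le[OF term_le sa sd])
  also have "\<dots> = \<bar>y - z\<bar> * L" unfolding L_def by (rule suminf_mult[OF sL])
  finally show "\<bar>bin_series \<omega> y - bin_series \<omega> z\<bar> \<le> \<bar>y - z\<bar> * L" .
qed

lemma bin_series_equicontinuous:
  assumes "0 \<le> r" "r < 1" "0 < \<epsilon>"
  obtains \<delta> where "0 < \<delta>"
    and "\<And>\<omega> y z. 0 \<le> y \<Longrightarrow> y \<le> r \<Longrightarrow> 0 \<le> z \<Longrightarrow> z \<le> r \<Longrightarrow> \<bar>y - z\<bar> < \<delta> \<Longrightarrow>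
           \<bar>bin_series \<omega> y - bin_series \<omega> z\<bar> < \<epsilon>"
proof -
  obtain L where L: "0 \<le> L"
    "\<And>\<omega> y z. 0 \<le> y \<Longrightarrow> y \<le> r \<Longrightarrow> 0 \<le> z \<Longrightarrow> z \<le> r \<Longrightarrow>
       \<bar>bin_series \<omega> y - bin_series \<omega> z\<bar> \<le> \<bar>y - z\<bar> * L"
    using bin_series_lipschitz[OF assms(1,2)] by blast
  show ?thesis
  proof
    show "0 < \<epsilon> / (L + 1)" using assms L(1) by simp
    fix \<omega> y z assume yz: "0 \<le> y" "y \<le> r" "0 \<le> z" "z \<le> r" "\<bar>y - z\<bar> < \<epsilon> / (L + 1)"
    have "\<bar>y - z\<bar> * L \<le> \<epsilon> / (L + 1) * L" using yz(5) L(1) by (intro mult_right_mono) auto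
    also have "\<dots> < \<epsilon>" using assms(3) L(1) by (simp add: field_simps)
    finally show "\<bar>bin_series \<omega> y - bin_series \<omega> z\<bar> < \<epsilon>" using L(2)[OF yz(1-4), of \<omega>] by linarith
  qed
qed

subsection \<open>Lexicographic order and the sets \<open>\<Omega>\<close>\<close>

lemma lex_less_linear: "u \<noteq> v \<Longrightarrow> lex_less u v \<or> lex_less v u"
proof -
  assume "u \<noteq> v"
  then obtain m where "u m \<noteq> v m" by blast
  define n where "n = (LEAST n. u n \<noteq> v n)"
  have "u n \<noteq> v n" unfolding n_def by (rule LeastI[of _ m]) fact
  moreover have "\<forall>k<n. u k = v k" unfolding n_def using not_less_Least by blast
  ultimately show ?thesis unfolding lex_less_def by (metis (full_types))
qed

lemma lex_less_first_digit: "\<not> u 0 \<Longrightarrow> v 0 \<Longrightarrow> lex_less u v"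
  unfolding lex_less_def by (intro exI[of _ 0]) auto

lemma funpow_shift_funpow_shift: "(shift ^^ m) ((shift ^^ n) \<omega>) = (shift ^^ (m + n)) \<omega>"
  by (simp add: funpow_add)

lemma Omega_minus_funpow_shift: "\<omega> \<in> Omega_minus \<alpha> \<beta> \<Longrightarrow> (shift ^^ n) \<omega> \<in> Omega_minus \<alpha> \<beta>"
  unfolding Omega_minus_def by (simp add: funpow_shift_funpow_shift)

lemma Omega_plus_funpow_shift: "\<omega> \<in> Omega_plus \<alpha> \<beta> \<Longrightarrow> (shift ^^ n) \<omega> \<in> Omega_plus \<alpha> \<beta>"
  unfolding Omega_plus_def by (simp add: funpow_shift_funpow_shift)

lemma Omega_ab_funpow_shift: "\<omega> \<in> Omega_ab \<alpha> \<beta> \<Longrightarrow> (shift ^^ n) \<omega> \<in> Omega_ab \<alpha> \<beta>"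
  unfolding Omega_ab_def using Omega_minus_funpow_shift Omega_plus_funpow_shift by blast

locale admissible_pair =
  fixes \<alpha> \<beta> :: bstr
  assumes admissible: "admissible \<alpha> \<beta>"
begin

lemma alpha_0: "\<not> \<alpha> 0" and beta_0: "\<beta> 0"
  using admissible unfolding admissible_def by auto

lemma alpha_in_Omega_minus: "\<alpha> \<in> Omega_minus \<alpha> \<beta>"
  using admissible unfolding admissible_def Omega_minus_def by auto

lemma beta_in_Omega_plus: "\<beta> \<in> Omega_plus \<alpha> \<beta>"
  using admissible unfolding admissible_def Omega_plus_def by auto

lemma funpow_shift_alpha_in_Omega_ab: "(shift ^^ n) \<alpha> \<in> Omega_ab \<alpha> \<beta>"
  unfolding Omega_ab_def using alpha_in_Omega_minus Omega_minus_funpow_shift by blast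

lemma funpow_shift_beta_in_Omega_ab: "(shift ^^ n) \<beta> \<in> Omega_ab \<alpha> \<beta>"
  unfolding Omega_ab_def using beta_in_Omega_plus Omega_plus_funpow_shift by blast

lemma alpha_in_Omega_ab: "\<alpha> \<in> Omega_ab \<alpha> \<beta>"
  using funpow_shift_alpha_in_Omega_ab[of 0] by simp

lemma beta_in_Omega_ab: "\<beta> \<in> Omega_ab \<alpha> \<beta>"
  using funpow_shift_beta_in_Omega_ab[of 0] by simp

lemma Omega_minus_digit_0:
  assumes "u \<in> Omega_minus \<alpha> \<beta>" "\<not> u 0"
  shows "lex_le u \<alpha>"
proof -
  have "\<not> (lex_less \<alpha> u \<and> lex_le u \<beta>)"
    using assms(1) unfolding Omega_minus_def by (auto dest!: spec[where x=0])
  then show ?thesis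
    using lex_less_first_digit[of u \<beta>, OF assms(2) beta_0] lex_less_linear[of u \<alpha>] unfolding lex_le_def by blast
qed

lemma Omega_plus_digit_0:
  assumes "u \<in> Omega_plus \<alpha> \<beta>" "\<not> u 0"
  shows "lex_less u \<alpha>"
proof -
  have "\<not> (lex_le \<alpha> u \<and> lex_less u \<beta>)"
    using assms(1) unfolding Omega_plus_def by (auto dest!: spec[where x=0])
  then show ?thesis
    using lex_less_first_digit[of u \<beta>, OF assms(2) beta_0] lex_less_linear[of u \<alpha>] unfolding lex_le_def by blast
qed

lemma Omega_minus_digit_1:
  assumes "v \<in> Omega_minus \<alpha> \<beta>" "v 0"
  shows "lex_less \<beta> v"
proof -
  have "\<not> (lex_less \<alpha> v \<and> lex_le v \<beta>)"
    using assms(1) unfolding Omega_minus_def by (auto dest!: spec[where x=0])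
  then show ?thesis
    using lex_less_first_digit[of \<alpha> v, OF alpha_0 assms(2)] lex_less_linear[of v \<beta>] unfolding lex_le_def by blast
qed

lemma Omega_plus_digit_1:
  assumes "v \<in> Omega_plus \<alpha> \<beta>" "v 0"
  shows "lex_le \<beta> v"
proof -
  have "\<not> (lex_le \<alpha> v \<and> lex_less v \<beta>)"
    using assms(1) unfolding Omega_plus_def by (auto dest!: spec[where x=0])
  then show ?thesis
    using lex_less_first_digit[of \<alpha> v, OF alpha_0 assms(2)] lex_less_linear[of v \<beta>] unfolding lex_le_def by blast
qed

lemma Omega_ab_digit_0: "u \<in> Omega_ab \<alpha> \<beta> \<Longrightarrow> \<not> u 0 \<Longrightarrow> lex_le u \<alpha>"
  unfolding Omega_ab_def lex_le_def using Omega_minus_digit_0 Omega_plus_digit_0 lex_le_def by blast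

lemma Omega_ab_digit_1: "v \<in> Omega_ab \<alpha> \<beta> \<Longrightarrow> v 0 \<Longrightarrow> lex_le \<beta> v"
  unfolding Omega_ab_def lex_le_def using Omega_minus_digit_1 Omega_plus_digit_1 lex_le_def by blast

end

subsection \<open>Parameters at which the first digit decides the order\<close>

definition digit_ordered :: "bstr \<Rightarrow> bstr \<Rightarrow> real \<Rightarrow> bool" where
  "digit_ordered \<alpha> \<beta> y \<longleftrightarrow>
     (\<forall>u\<in>Omega_ab \<alpha> \<beta>. \<forall>v\<in>Omega_ab \<alpha> \<beta>. \<not> u 0 \<longrightarrow> v 0 \<longrightarrow> bin_series u y \<le> bin_series v y)"

lemma digit_ordered_le_half:
  assumes "0 \<le> y" "y \<le> 1/2"
  shows "digit_ordered \<alpha> \<beta> y"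
  unfolding digit_ordered_def
proof (intro ballI impI)
  fix u v :: bstr assume "\<not> u 0" "v 0"
  have y1: "y < 1" using assms by simp
  have "y * bin_series (shift u) y \<le> y * (1 / (1 - y))"
    using bin_series_le[OF assms(1) y1] assms by (intro mult_left_mono) auto
  also have "\<dots> \<le> 1" using assms by (simp add: field_simps)
  finally have "bin_series u y \<le> 1"
    using bin_series_unfold[OF assms(1) y1, of u] \<open>\<not> u 0\<close> by (simp add: bit_def)
  moreover have "1 \<le> bin_series v y"
    using bin_series_unfold[OF assms(1) y1, of v] bin_series_nonneg[OF assms(1) y1] \<open>v 0\<close> assms(1)
    by (simp add: bit_def)
  ultimately show "bin_series u y \<le> bin_series v y" by linarith
qed

context admissible_pair
begin

lemma digit_ordered_le_alpha:
  assumes "0 \<le> y" "y < 1" "digit_ordered \<alpha> \<beta> y" "u \<in> Omega_ab \<alpha> \<beta>" "\<not> u 0"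
  shows "bin_series u y \<le> bin_series \<alpha> y"
proof (cases "u = \<alpha>")
  case False
  then obtain n where n: "\<forall>k<n. u k = \<alpha> k" "\<not> u n" "\<alpha> n"
    using Omega_ab_digit_0[OF assms(4,5)] unfolding lex_le_def lex_less_def by blast
  show ?thesis
  proof (rule bin_series_mono_common_prefix[OF assms(1,2) n(1)])
    show "bin_series ((shift ^^ n) u) y \<le> bin_series ((shift ^^ n) \<alpha>) y"
      using assms(3) Omega_ab_funpow_shift[OF assms(4)] funpow_shift_alpha_in_Omega_ab n
      unfolding digit_ordered_def by (simp add: funpow_shift)
  qed
qed simp

lemma digit_ordered_beta_le:
  assumes "0 \<le> y" "y < 1" "digit_ordered \<alpha> \<beta> y" "v \<in> Omega_ab \<alpha> \<beta>" "v 0"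
  shows "bin_series \<beta> y \<le> bin_series v y"
proof (cases "v = \<beta>")
  case False
  then obtain n where n: "\<forall>k<n. \<beta> k = v k" "\<not> \<beta> n" "v n"
    using Omega_ab_digit_1[OF assms(4,5)] unfolding lex_le_def lex_less_def by blast
  show ?thesis
  proof (rule bin_series_mono_common_prefix[OF assms(1,2) n(1)])
    show "bin_series ((shift ^^ n) \<beta>) y \<le> bin_series ((shift ^^ n) v) y"
      using assms(3) Omega_ab_funpow_shift[OF assms(4)] funpow_shift_beta_in_Omega_ab n
      unfolding digit_ordered_def by (simp add: funpow_shift)
  qed
qed simp

lemma digit_ordered_gap:
  assumes "0 \<le> y" "y < 1" "digit_ordered \<alpha> \<beta> y"
    and "u \<in> Omega_ab \<alpha> \<beta>" "\<not> u 0" "v \<in> Omega_ab \<alpha> \<beta>" "v 0"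
  shows "bin_series \<beta> y - bin_series \<alpha> y \<le> bin_series v y - bin_series u y"
  using digit_ordered_le_alpha[OF assms(1-5)] digit_ordered_beta_le[OF assms(1-3,6,7)] by simp

lemma digit_ordered_left_closed:
  assumes "0 < s" "s < 1" "\<And>t. 0 \<le> t \<Longrightarrow> t < s \<Longrightarrow> digit_ordered \<alpha> \<beta> t"
  shows "digit_ordered \<alpha> \<beta> s"
  unfolding digit_ordered_def
proof (intro ballI impI, rule ccontr)
  fix u v assume uv: "u \<in> Omega_ab \<alpha> \<beta>" "v \<in> Omega_ab \<alpha> \<beta>" "\<not> u 0" "v 0"
    and "\<not> bin_series u s \<le> bin_series v s"
  define d where "d = (bin_series u s - bin_series v s) / 2"
  have "0 < d" and d: "2 * d = bin_series u s - bin_series v s"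
    using \<open>\<not> bin_series u s \<le> bin_series v s\<close> unfolding d_def by simp_all
  then obtain \<delta> where "0 < \<delta>" and \<delta>:
    "\<And>\<omega> y z. 0 \<le> y \<Longrightarrow> y \<le> s \<Longrightarrow> 0 \<le> z \<Longrightarrow> z \<le> s \<Longrightarrow> \<bar>y - z\<bar> < \<delta> \<Longrightarrow>
       \<bar>bin_series \<omega> y - bin_series \<omega> z\<bar> < d"
    using bin_series_equicontinuous[OF less_imp_le[OF assms(1)] assms(2)] by blast
  define t where "t = max 0 (s - \<delta> / 2)"
  have t: "0 \<le> t" "t < s" "\<bar>t - s\<bar> < \<delta>"
    using \<open>0 < \<delta>\<close> assms(1) unfolding t_def by auto
  have "bin_series u s - d < bin_series u t" "bin_series v t < bin_series v s + d"
    using \<delta>[of t s u] \<delta>[of t s v] t assms(1) by (simp_all add: abs_less_iff)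
  moreover have "bin_series u t \<le> bin_series v t"
    using assms(3)[OF t(1,2)] uv unfolding digit_ordered_def by blast
  ultimately show False using d by linarith
qed

text \<open>A positive gap \<open>P \<beta> s - P \<alpha> s\<close> separates the two digit classes uniformly, so it survives
  a small increase of the parameter.\<close>

lemma digit_ordered_right_open:
  assumes "0 \<le> s" "s < 1" "digit_ordered \<alpha> \<beta> s" "bin_series \<alpha> s < bin_series \<beta> s"
  obtains \<epsilon> where "0 < \<epsilon>" "\<And>t. s \<le> t \<Longrightarrow> t < s + \<epsilon> \<Longrightarrow> digit_ordered \<alpha> \<beta> t"
proof -
  define r where "r = (1 + s) / 2"
  have r: "0 \<le> r" "s < r" "r < 1" using assms(1,2) unfolding r_def by auto
  define d where "d = (bin_series \<beta> s - bin_series \<alpha> s) / 2"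
  have "0 < d" using assms(4) unfolding d_def by simp
  then obtain \<delta> where "0 < \<delta>" and \<delta>:
    "\<And>\<omega> y z. 0 \<le> y \<Longrightarrow> y \<le> r \<Longrightarrow> 0 \<le> z \<Longrightarrow> z \<le> r \<Longrightarrow> \<bar>y - z\<bar> < \<delta> \<Longrightarrow>
       \<bar>bin_series \<omega> y - bin_series \<omega> z\<bar> < d"
    using bin_series_equicontinuous[OF r(1,3)] by blast
  show ?thesis
  proof
    show "0 < min \<delta> (r - s)" using \<open>0 < \<delta>\<close> r(2) by simp
    fix t assume t: "s \<le> t" "t < s + min \<delta> (r - s)"
    then have "0 \<le> t" "t \<le> r" "\<bar>t - s\<bar> < \<delta>" using assms(1) by auto
    then have close: "bin_series \<omega> s - d < bin_series \<omega> t" "bin_series \<omega> t < bin_series \<omega> s + d"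
      for \<omega> using \<delta>[of t s \<omega>] assms(1) r by (simp_all add: abs_less_iff)
    show "digit_ordered \<alpha> \<beta> t"
      unfolding digit_ordered_def
    proof (intro ballI impI)
      fix u v assume uv: "u \<in> Omega_ab \<alpha> \<beta>" "v \<in> Omega_ab \<alpha> \<beta>" "\<not> u 0" "v 0"
      have "2 * d \<le> bin_series v s - bin_series u s"
        unfolding d_def using digit_ordered_gap[OF assms(1-3) uv(1,3,2,4)] by simp
      then show "bin_series u t \<le> bin_series v t" using close(2)[of u] close(1)[of v] by linarith
    qed
  qed
qed

end

locale separated_pair = admissible_pair +
  assumes proj_neq: "\<And>x. 0 < x \<Longrightarrow> x < 1 \<Longrightarrow> proj x \<alpha> \<noteq> proj x \<beta>"
begin

lemma digit_ordered_alpha_less_beta: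
  assumes "0 \<le> y" "y < 1" "digit_ordered \<alpha> \<beta> y"
  shows "bin_series \<alpha> y < bin_series \<beta> y"
proof (cases "y = 0")
  case True
  then show ?thesis using alpha_0 beta_0 by (simp add: bin_series_at_0 bit_def)
next
  case False
  have "bin_series \<alpha> y \<le> bin_series \<beta> y"
    using assms(3) alpha_in_Omega_ab beta_in_Omega_ab
      alpha_0 beta_0 unfolding digit_ordered_def by auto
  moreover have "bin_series \<alpha> y \<noteq> bin_series \<beta> y"
    using proj_neq[of y] False assms(1,2) by (auto simp: proj_eq_bin_series)
  ultimately show ?thesis by simp
qed

lemma digit_ordered_everywhere:
  assumes "0 \<le> y" "y < 1"
  shows "digit_ordered \<alpha> \<beta> y"
proof (rule ccontr)
  assume "\<not> digit_ordered \<alpha> \<beta> y"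
  define Bad where "Bad = {t. 0 \<le> t \<and> t < 1 \<and> \<not> digit_ordered \<alpha> \<beta> t}"
  have "y \<in> Bad" using assms \<open>\<not> digit_ordered \<alpha> \<beta> y\<close> unfolding Bad_def by auto
  have bdd: "bdd_below Bad" unfolding Bad_def by (rule bdd_belowI[of _ 0]) auto
  define s where "s = Inf Bad"
  have Bad_ge_s: "s \<le> t" if "t \<in> Bad" for t
    unfolding s_def using cInf_lower[OF that bdd] .
  have "s < 1" using Bad_ge_s[OF \<open>y \<in> Bad\<close>] assms by simp
  have "1/2 \<le> s"
    unfolding s_def
  proof (rule cInf_greatest)
    show "Bad \<noteq> {}" using \<open>y \<in> Bad\<close> by blast
    fix t assume "t \<in> Bad"
    then have "0 \<le> t" "\<not> digit_ordered \<alpha> \<beta> t" unfolding Bad_def by auto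
    then show "1/2 \<le> t" using digit_ordered_le_half[of t \<alpha> \<beta>] by linarith
  qed
  then have s: "0 \<le> s" "0 < s" by auto
  have ordered_s: "digit_ordered \<alpha> \<beta> s"
  proof (rule digit_ordered_left_closed[OF s(2) \<open>s < 1\<close>])
    fix t assume t: "0 \<le> t" "t < s"
    show "digit_ordered \<alpha> \<beta> t"
    proof (rule ccontr)
      assume "\<not> digit_ordered \<alpha> \<beta> t"
      then have "t \<in> Bad" using t \<open>s < 1\<close> unfolding Bad_def by auto
      then show False using Bad_ge_s t(2) by fastforce
    qed
  qed
  obtain \<epsilon> where "0 < \<epsilon>" and \<epsilon>: "\<And>t. s \<le> t \<Longrightarrow> t < s + \<epsilon> \<Longrightarrow> digit_ordered \<alpha> \<beta> t"
    using digit_ordered_right_open[OF s(1) \<open>s < 1\<close> ordered_s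
        digit_ordered_alpha_less_beta[OF s(1) \<open>s < 1\<close> ordered_s]] by blast
  obtain b where b: "b \<in> Bad" "b < s + \<epsilon>"
    using cInf_less_iff[of Bad "s + \<epsilon>"] \<open>y \<in> Bad\<close> bdd \<open>0 < \<epsilon>\<close> unfolding s_def by auto
  have "\<not> digit_ordered \<alpha> \<beta> b" using b(1) by (simp add: Bad_def)
  then show False using \<epsilon>[OF Bad_ge_s[OF b(1)] b(2)] by contradiction
qed

lemma bin_series_strict_mono:
  assumes "0 < x" "x < 1" "u \<in> Omega_ab \<alpha> \<beta>" "v \<in> Omega_ab \<alpha> \<beta>" "lex_less u v"
  shows "bin_series u x < bin_series v x"
proof -
  have x: "0 \<le> x" using assms(1) by simp
  note ordered = digit_ordered_everywhere[OF x assms(2)]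
  obtain n where n: "\<forall>k<n. u k = v k" "\<not> u n" "v n" using assms(5) unfolding lex_less_def by blast
  have "bin_series \<beta> x - bin_series \<alpha> x
          \<le> bin_series ((shift ^^ n) v) x - bin_series ((shift ^^ n) u) x"
    using digit_ordered_gap[OF x assms(2) ordered Omega_ab_funpow_shift[OF assms(3)] _
        Omega_ab_funpow_shift[OF assms(4)]] n by (simp add: funpow_shift)
  moreover have "bin_series \<alpha> x < bin_series \<beta> x"
    using digit_ordered_alpha_less_beta[OF x assms(2) ordered] .
  ultimately have "0 < bin_series ((shift ^^ n) v) x - bin_series ((shift ^^ n) u) x"
    by linarith
  then have "0 < x ^ n * (bin_series ((shift ^^ n) v) x - bin_series ((shift ^^ n) u) x)"
    using assms(1) by (intro mult_pos_pos zero_less_power)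
  then show ?thesis using bin_series_diff_common_prefix[OF x assms(2) n(1)] by linarith
qed

lemma proj_strict_mono:
  assumes "0 < x" "x < 1" "u \<in> Omega_ab \<alpha> \<beta>" "v \<in> Omega_ab \<alpha> \<beta>" "lex_less u v"
  shows "proj x u < proj x v"
  unfolding proj_eq_bin_series
  using bin_series_strict_mono[OF assms] assms(2) by (intro mult_strict_left_mono) auto

end

subsection \<open>Conjugacy with the shift\<close>

lemma proj_shift:
  assumes "a * x = 1" "0 \<le> x" "x < 1"
  shows "proj x (shift \<omega>) = a * proj x \<omega> + (1 - a) * bit (\<omega> 0)"
proof -
  have ax: "a * (1 - x) = a - 1" using assms(1) by (simp add: algebra_simps)
  have "a * (bin_series \<omega> x - bit (\<omega> 0)) = (a * x) * bin_series (shift \<omega>) x"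
    using bin_series_unfold[OF assms(2,3), of \<omega>] by (simp add: algebra_simps)
  then have "bin_series (shift \<omega>) x = a * (bin_series \<omega> x - bit (\<omega> 0))"
    using assms(1) by simp
  then have "proj x (shift \<omega>) = (a * (1 - x)) * (bin_series \<omega> x - bit (\<omega> 0))"
    unfolding proj_eq_bin_series by (simp add: mult_ac)
  also have "\<dots> = (a - 1) * bin_series \<omega> x + (1 - a) * bit (\<omega> 0)"
    unfolding ax by (simp add: algebra_simps)
  also have "(a - 1) * bin_series \<omega> x = a * proj x \<omega>"
    unfolding proj_eq_bin_series mult.assoc[symmetric] ax ..
  finally show ?thesis .
qed

lemma proj_le_of_digit_0:
  assumes "0 \<le> x" "x < 1" "\<not> \<omega> 0"
  shows "proj x \<omega> \<le> x"
proof -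
  have "(1 - x) * (x * bin_series (shift \<omega>) x) \<le> (1 - x) * (x * (1 / (1 - x)))"
    using bin_series_le[OF assms(1,2)] assms(1,2) by (intro mult_left_mono) auto
  then show ?thesis
    unfolding proj_eq_bin_series bin_series_unfold[OF assms(1,2), of \<omega>] using assms by (simp add: bit_def)
qed

lemma proj_ge_of_digit_1:
  assumes "0 \<le> x" "x < 1" "\<omega> 0"
  shows "1 - x \<le> proj x \<omega>"
proof -
  have "1 \<le> bin_series \<omega> x"
    using bin_series_unfold[OF assms(1,2), of \<omega>] bin_series_nonneg[OF assms(1,2)] assms
    by (simp add: bit_def)
  then show ?thesis unfolding proj_eq_bin_series using assms(2) by simp
qed

lemma f_plus_proj:
  assumes "a * x = 1" "0 \<le> x" "x < 1" "p \<le> proj x \<omega> \<longleftrightarrow> \<omega> 0"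
  shows "f_plus a p (proj x \<omega>) = proj x (shift \<omega>)"
  using assms(4) unfolding proj_shift[OF assms(1-3)] f_plus_def by (auto simp: bit_def)

lemma f_minus_proj:
  assumes "a * x = 1" "0 \<le> x" "x < 1" "p < proj x \<omega> \<longleftrightarrow> \<omega> 0"
  shows "f_minus a p (proj x \<omega>) = proj x (shift \<omega>)"
  using assms(4) unfolding proj_shift[OF assms(1-3)] f_minus_def by (auto simp: bit_def)

context separated_pair
begin

lemma proj_mono:
  assumes "0 < x" "x < 1" "u \<in> Omega_ab \<alpha> \<beta>" "v \<in> Omega_ab \<alpha> \<beta>" "lex_le u v"
  shows "proj x u \<le> proj x v"
  using proj_strict_mono[OF assms(1-4)] assms(5) unfolding lex_le_def by fastforce

lemma proj_alpha_less_beta: "0 < x \<Longrightarrow> x < 1 \<Longrightarrow> proj x \<alpha> < proj x \<beta>"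
  using proj_strict_mono alpha_in_Omega_ab beta_in_Omega_ab lex_less_first_digit[of \<alpha> \<beta>, OF alpha_0 beta_0]
  by blast

text \<open>In the threshold \<open>max (\<pi>\<^sub>x \<alpha>) (1 - x)\<close> the term \<open>1 - x\<close> only serves to keep it inside
  \<open>[1 - x, x]\<close>.\<close>

lemma threshold_Omega_plus:
  assumes "0 < x" "x < 1" "\<omega> \<in> Omega_plus \<alpha> \<beta>"
  shows "max (proj x \<alpha>) (1 - x) \<le> proj x \<omega> \<longleftrightarrow> \<omega> 0"
proof
  have \<omega>: "\<omega> \<in> Omega_ab \<alpha> \<beta>" using assms(3) unfolding Omega_ab_def by blast
  show "\<omega> 0" if "max (proj x \<alpha>) (1 - x) \<le> proj x \<omega>"
  proof (rule ccontr)
    assume "\<not> \<omega> 0"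
    then have "proj x \<omega> < proj x \<alpha>"
      using proj_strict_mono[OF assms(1,2) \<omega> alpha_in_Omega_ab Omega_plus_digit_0[OF assms(3)]] by blast
    then show False using that by simp
  qed
  assume "\<omega> 0"
  then have "proj x \<beta> \<le> proj x \<omega>" "1 - x \<le> proj x \<omega>"
    using proj_mono[OF assms(1,2) beta_in_Omega_ab \<omega> Omega_plus_digit_1[OF assms(3)]]
      proj_ge_of_digit_1[of x \<omega>] assms(1,2) by auto
  then show "max (proj x \<alpha>) (1 - x) \<le> proj x \<omega>"
    using proj_alpha_less_beta[OF assms(1,2)] by simp
qed

lemma threshold_Omega_minus:
  assumes "0 < x" "x < 1" "\<omega> \<in> Omega_minus \<alpha> \<beta>"
  shows "max (proj x \<alpha>) (1 - x) < proj x \<omega> \<longleftrightarrow> \<omega> 0"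
proof
  have \<omega>: "\<omega> \<in> Omega_ab \<alpha> \<beta>" using assms(3) unfolding Omega_ab_def by blast
  show "\<omega> 0" if "max (proj x \<alpha>) (1 - x) < proj x \<omega>"
  proof (rule ccontr)
    assume "\<not> \<omega> 0"
    then have "proj x \<omega> \<le> proj x \<alpha>"
      using proj_mono[OF assms(1,2) \<omega> alpha_in_Omega_ab Omega_minus_digit_0[OF assms(3)]] by blast
    then show False using that by simp
  qed
  assume "\<omega> 0"
  then have "proj x \<beta> < proj x \<omega>"
    using proj_strict_mono[OF assms(1,2) beta_in_Omega_ab \<omega> Omega_minus_digit_1[OF assms(3)]] by blast
  moreover have "1 - x \<le> proj x \<beta>" using proj_ge_of_digit_1[of x \<beta>] beta_0 assms(1,2) by simp
  ultimately show "max (proj x \<alpha>) (1 - x) < proj x \<omega>"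
    using proj_alpha_less_beta[OF assms(1,2)] by simp
qed

end

theorem lemma2:
  fixes \<alpha> \<beta> :: bstr
  assumes "admissible \<alpha> \<beta>"
    and "non_null \<alpha> \<beta>"
    and "\<not> (\<exists>x\<in>{0<..<1}. proj x \<alpha> = proj x \<beta>)"
  shows "\<forall>a::real. 1 < a \<and> a \<le> 2 \<longrightarrow>
           (\<exists>p. 1 - 1 / a \<le> p \<and> p \<le> 1 / a \<and>
              (\<forall>\<omega>\<in>Omega_plus \<alpha> \<beta>. f_plus a p (proj (1 / a) \<omega>) = proj (1 / a) (shift \<omega>)) \<and>
              (\<forall>\<omega>\<in>Omega_minus \<alpha> \<beta>. f_minus a p (proj (1 / a) \<omega>) = proj (1 / a) (shift \<omega>)))"
proof (intro allI impI)
  fix a :: real assume a: "1 < a \<and> a \<le> 2"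
  interpret separated_pair \<alpha> \<beta>
    using assms(1,3) by unfold_locales auto
  define x where "x = 1 / a"
  have x: "0 < x" "x < 1" "1 / 2 \<le> x" "a * x = 1"
    using a unfolding x_def by (auto simp: field_simps)
  define p where "p = max (proj x \<alpha>) (1 - x)"
  have "1 - x \<le> p" "p \<le> x"
    using proj_le_of_digit_0[of x \<alpha>] alpha_0 x unfolding p_def by auto
  moreover have "\<forall>\<omega>\<in>Omega_plus \<alpha> \<beta>. f_plus a p (proj x \<omega>) = proj x (shift \<omega>)"
    using f_plus_proj[OF x(4) less_imp_le[OF x(1)] x(2)] threshold_Omega_plus[OF x(1,2)]
    unfolding p_def by blast
  moreover have "\<forall>\<omega>\<in>Omega_minus \<alpha> \<beta>. f_minus a p (proj x \<omega>) = proj x (shift \<omega>)"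
    using f_minus_proj[OF x(4) less_imp_le[OF x(1)] x(2)] threshold_Omega_minus[OF x(1,2)]
    unfolding p_def by blast
  ultimately show "\<exists>p. 1 - 1 / a \<le> p \<and> p \<le> 1 / a \<and>
      (\<forall>\<omega>\<in>Omega_plus \<alpha> \<beta>. f_plus a p (proj (1 / a) \<omega>) = proj (1 / a) (shift \<omega>)) \<and>
      (\<forall>\<omega>\<in>Omega_minus \<alpha> \<beta>. f_minus a p (proj (1 / a) \<omega>) = proj (1 / a) (shift \<omega>))"
    unfolding x_def by blast
qed

end
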